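(* Let $P,Q\in\mathcal{PP}(n)$ with $\iota(P)\leq Q$. Then $\langle P,Q\rangle_q=q^{n(n-1)-\ell(P)-\ell(Q)}$, where $\ell(R)=\sharp\{(x,y)\in R^2\mid x<_r y\}$.
   Context: A plane poset is a finite set with two partial orders $\leq_h,\leq_r$ such that two distinct elements are $\leq_h$-comparable iff they are not $\leq_r$-comparable; $\mathcal{PP}(n)$ is the set of isomorphism classes of plane posets with $n$ elements. On a plane poset, $x\leq y$ iff ($x\leq_h y$ or $x\leq_r y$) is a total order (known fact). For $P,Q\in\mathcal{PP}(n)$, $\theta_{P,Q}$ is the increasing bijection $P\to Q$ and $P\leq Q$ means: for all $x,y\in P$, $\theta_{P,Q}(x)\leq_h\theta_{P,Q}(y)$ in $Q$ implies $x\leq_h y$ in $P$. $\iota(P)=(P,\leq_r,\leq_h)$. For $q$ in a field $K$, $\langle P,Q\rangle_q=q^{\phi(P,Q)}$ if $\iota(P)\leq Q$ and $0$ otherwise, where $\phi(P,Q)=\sharp\{(x,y)\in P^2\mid x<_r y,\ \theta_{P,Q}(x)<_h\theta_{P,Q}(y)\}+\sharp\{(x,y)\in P^2\mid x<_h y,\ \theta_{P,Q}(x)<_r\theta_{P,Q}(y)\}$, with $q^0=1$. *)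

theory Defs
  imports Main
begin

definition plane_poset :: "'a set \<Rightarrow> 'a rel \<Rightarrow> 'a rel \<Rightarrow> bool" where
  "plane_poset A h r \<longleftrightarrow> finite A \<and>
     h \<subseteq> A \<times> A \<and> r \<subseteq> A \<times> A \<and>
     partial_order_on A h \<and> partial_order_on A r \<and>
     (\<forall>x\<in>A. \<forall>y\<in>A. x \<noteq> y \<longrightarrow>
        (((x,y) \<in> h \<or> (y,x) \<in> h) \<longleftrightarrow> \<not> ((x,y) \<in> r \<or> (y,x) \<in> r)))"

definition tot :: "'a rel \<Rightarrow> 'a rel \<Rightarrow> 'a rel" where
  "tot h r = h \<union> r"

definition theta :: "'a set \<Rightarrow> 'a rel \<Rightarrow> 'a rel \<Rightarrow> 'b set \<Rightarrow> 'b rel \<Rightarrow> 'b rel \<Rightarrow> 'a \<Rightarrow> 'b" where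
  "theta A h r B h' r' = (THE f. bij_betw f A B \<and>
      (\<forall>x\<in>A. \<forall>y\<in>A. (x,y) \<in> tot h r \<longrightarrow> (f x, f y) \<in> tot h' r') \<and>
      (\<forall>x. x \<notin> A \<longrightarrow> f x = undefined))"

definition pp_le :: "'a set \<Rightarrow> 'a rel \<Rightarrow> 'a rel \<Rightarrow> 'b set \<Rightarrow> 'b rel \<Rightarrow> 'b rel \<Rightarrow> bool" where
  "pp_le A h r B h' r' \<longleftrightarrow>
     (\<forall>x\<in>A. \<forall>y\<in>A. (theta A h r B h' r' x, theta A h r B h' r' y) \<in> h' \<longrightarrow> (x,y) \<in> h)"

text \<open>iota(P) = (P, <=_r, <=_h); so iota(P) <= Q is pp_le A r h B h' r'.\<close>

definition strict :: "'a rel \<Rightarrow> 'a rel" where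
  "strict R = {(x,y). (x,y) \<in> R \<and> x \<noteq> y}"

definition phi :: "'a set \<Rightarrow> 'a rel \<Rightarrow> 'a rel \<Rightarrow> 'b set \<Rightarrow> 'b rel \<Rightarrow> 'b rel \<Rightarrow> nat" where
  "phi A h r B h' r' =
     (let \<theta> = theta A h r B h' r' in
      card {(x,y). x \<in> A \<and> y \<in> A \<and> (x,y) \<in> strict r \<and> (\<theta> x, \<theta> y) \<in> strict h'}
    + card {(x,y). x \<in> A \<and> y \<in> A \<and> (x,y) \<in> strict h \<and> (\<theta> x, \<theta> y) \<in> strict r'})"

definition pairing :: "'k::field \<Rightarrow> 'a set \<Rightarrow> 'a rel \<Rightarrow> 'a rel \<Rightarrow> 'b set \<Rightarrow> 'b rel \<Rightarrow> 'b rel \<Rightarrow> 'k" where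
  "pairing q A h r B h' r' =
     (if pp_le A r h B h' r' then q ^ phi A h r B h' r' else 0)"

definition ell :: "'a set \<Rightarrow> 'a rel \<Rightarrow> nat" where
  "ell A r = card {(x,y). x \<in> A \<and> y \<in> A \<and> (x,y) \<in> strict r}"

end

theory Submission
  imports Defs
begin

text \<open>In a plane poset the union of the two orders is linear, so the increasing bijection
  theta exists and is unique. The hypothesis iota(P) <= Q says that theta pulls <=_h-pairs of Q
  back to <=_r-pairs of P; hence the first summand of phi(P,Q) counts all strict <=_h-pairs of Q.
  A strict <=_h-pair of P is <=_r-incomparable, so theta cannot send it to an <=_h-pair and must
  send it to a strict <=_r-pair; hence the second summand counts all strict <=_h-pairs of P.
  Finally, two distinct elements of a plane poset are comparable for exactly one of the orders,
  in exactly one direction, so an n-element plane poset has n(n-1)/2 strict <=_h- and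
  <=_r-pairs together.\<close>

lemma plane_posetD:
  assumes "plane_poset A h r"
  shows "finite A" and "partial_order_on A h" and "partial_order_on A r"
    and "x \<in> A \<Longrightarrow> y \<in> A \<Longrightarrow> x \<noteq> y \<Longrightarrow>
         ((x, y) \<in> h \<or> (y, x) \<in> h) \<longleftrightarrow> \<not> ((x, y) \<in> r \<or> (y, x) \<in> r)"
  using assms unfolding plane_poset_def by auto

lemma plane_poset_swap: "plane_poset A h r \<Longrightarrow> plane_poset A r h"
  unfolding plane_poset_def by blast

lemma plane_poset_trans_h_r:
  assumes P: "plane_poset A h r" and xy: "(x, y) \<in> h" and yz: "(y, z) \<in> r"
  shows "(x, z) \<in> h \<union> r"
proof -
  note h = partial_order_onD[OF plane_posetD(2)[OF P]]
  and r = partial_order_onD[OF plane_posetD(3)[OF P]]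
  have A: "x \<in> A" "y \<in> A" "z \<in> A" using xy yz h(4) r(4) by auto
  show ?thesis
  proof (rule ccontr)
    assume "(x, z) \<notin> h \<union> r"
    then have "x \<noteq> z" using A(1) refl_onD[OF h(1)] by auto
    with \<open>(x, z) \<notin> h \<union> r\<close> consider "(z, x) \<in> h" | "(z, x) \<in> r"
      using plane_posetD(4)[OF P A(1,3)] by blast
    then show False
    proof cases
      case 1
      then have "(z, y) \<in> h" using xy h(2) by (blast dest: transD)
      then show False using yz plane_posetD(4)[OF P A(2,3)] \<open>(x, z) \<notin> h \<union> r\<close> xy by blast
    next
      case 2
      then have "(y, x) \<in> r" using yz r(2) by (blast dest: transD)
      then show False using xy plane_posetD(4)[OF P A(1,2)] \<open>(x, z) \<notin> h \<union> r\<close> yz by blast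
    qed
  qed
qed

lemma plane_poset_linear_order_on_tot:
  assumes P: "plane_poset A h r"
  shows "linear_order_on A (tot h r)"
proof -
  note h = partial_order_onD[OF plane_posetD(2)[OF P]]
  and r = partial_order_onD[OF plane_posetD(3)[OF P]]
  have "trans (h \<union> r)"
  proof (rule transI)
    fix x y z assume "(x, y) \<in> h \<union> r" "(y, z) \<in> h \<union> r"
    then consider "(x, y) \<in> h" "(y, z) \<in> h" | "(x, y) \<in> r" "(y, z) \<in> r"
      | "(x, y) \<in> h" "(y, z) \<in> r" | "(x, y) \<in> r" "(y, z) \<in> h" by blast
    then show "(x, z) \<in> h \<union> r"
    proof cases
      case 1 then show ?thesis using h(2) by (blast dest: transD)
    next
      case 2 then show ?thesis using r(2) by (blast dest: transD)
    next
      case 3 then show ?thesis by (rule plane_poset_trans_h_r[OF P])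
    next
      case 4 then show ?thesis using plane_poset_trans_h_r[OF plane_poset_swap[OF P]] by blast
    qed
  qed
  moreover have "antisym (h \<union> r)"
  proof (rule antisymI)
    fix x y assume "(x, y) \<in> h \<union> r" "(y, x) \<in> h \<union> r"
    moreover have "x \<in> A" "y \<in> A" using calculation h(4) r(4) by auto
    ultimately show "x = y"
      using h(3) r(3) plane_posetD(4)[OF P] by (blast dest: antisymD)
  qed
  moreover have "total_on A (h \<union> r)"
    using plane_posetD(4)[OF P] by (auto simp: total_on_def)
  ultimately show ?thesis
    using h(1,4) r(4)
    by (auto simp: tot_def linear_order_on_def partial_order_on_def preorder_on_def refl_on_def)
qed

lemma linear_order_onD:
  assumes "linear_order_on A L"
  shows "refl_on A L" and "trans L" and "antisym L" and "L \<subseteq> A \<times> A" and "total_on A L"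
  using assms partial_order_onD[of A L] by (auto simp: linear_order_on_def)

definition rank_in :: "'a set \<Rightarrow> 'a rel \<Rightarrow> 'a \<Rightarrow> nat" where
  "rank_in A L x = card {y \<in> A. (y, x) \<in> L \<and> y \<noteq> x}"

lemma rank_in_less:
  assumes L: "linear_order_on A L" and "finite A" and xy: "(x, y) \<in> L" "x \<noteq> y"
  shows "rank_in A L x < rank_in A L y"
proof -
  note L = linear_order_onD[OF L]
  have "{z \<in> A. (z, x) \<in> L \<and> z \<noteq> x} \<subset> {z \<in> A. (z, y) \<in> L \<and> z \<noteq> y}"
    using xy L(2,3,4) by (auto dest: transD antisymD)
  then show ?thesis
    unfolding rank_in_def using \<open>finite A\<close> by (simp add: psubset_card_mono)
qed

lemma rank_in_le_iff:
  assumes L: "linear_order_on A L" and "finite A" and "x \<in> A" "y \<in> A"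
  shows "rank_in A L x \<le> rank_in A L y \<longleftrightarrow> (x, y) \<in> L"
proof (cases "x = y")
  case True
  then show ?thesis using linear_order_onD(1)[OF L] \<open>x \<in> A\<close> by (simp add: refl_onD)
next
  case False
  then have "(x, y) \<in> L \<or> (y, x) \<in> L"
    using linear_order_onD(5)[OF L] assms(3,4) by (simp add: total_on_def)
  then show ?thesis
    using rank_in_less[OF L \<open>finite A\<close>] False by fastforce
qed

lemma bij_betw_rank_in:
  assumes L: "linear_order_on A L" and "finite A"
  shows "bij_betw (rank_in A L) A {..<card A}"
proof -
  have inj: "inj_on (rank_in A L) A"
    using rank_in_le_iff[OF assms] linear_order_onD(3)[OF L]
    by (intro inj_onI) (metis antisymD order_refl)
  have "rank_in A L x < card A" if "x \<in> A" for x
    unfolding rank_in_def using that \<open>finite A\<close> by (intro psubset_card_mono) auto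
  then have "rank_in A L ` A \<subseteq> {..<card A}" by auto
  moreover have "card (rank_in A L ` A) = card {..<card A}"
    using card_image[OF inj] by simp
  ultimately show ?thesis
    using inj by (simp add: bij_betw_def card_subset_eq)
qed

lemma linear_order_on_mono_inj_reflects:
  assumes LA: "linear_order_on A LA" and LB: "linear_order_on B LB" and "inj_on f A"
    and mono: "\<forall>x\<in>A. \<forall>y\<in>A. (x, y) \<in> LA \<longrightarrow> (f x, f y) \<in> LB"
    and "x \<in> A" "y \<in> A" "(f x, f y) \<in> LB"
  shows "(x, y) \<in> LA"
proof (rule ccontr)
  assume "(x, y) \<notin> LA"
  moreover have "x \<noteq> y"
    using calculation linear_order_onD(1)[OF LA] assms(5) by (auto dest: refl_onD)
  ultimately have "(y, x) \<in> LA"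
    using linear_order_onD(5)[OF LA] assms(5,6) unfolding total_on_def by blast
  then have "f x = f y"
    using mono assms(5-7) linear_order_onD(3)[OF LB] by (blast dest: antisymD)
  with \<open>x \<noteq> y\<close> show False using \<open>inj_on f A\<close> assms(5,6) by (auto dest: inj_onD)
qed

lemma rank_in_mono_bij:
  assumes LA: "linear_order_on A LA" and LB: "linear_order_on B LB" and bij: "bij_betw f A B"
    and mono: "\<forall>x\<in>A. \<forall>y\<in>A. (x, y) \<in> LA \<longrightarrow> (f x, f y) \<in> LB" and "x \<in> A"
  shows "rank_in B LB (f x) = rank_in A LA x"
proof -
  have inj: "inj_on f A" using bij by (rule bij_betw_imp_inj_on)
  have "{z \<in> B. (z, f x) \<in> LB \<and> z \<noteq> f x} = f ` {y \<in> A. (y, x) \<in> LA \<and> y \<noteq> x}"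
  proof (intro equalityI subsetI)
    fix z assume z: "z \<in> {z \<in> B. (z, f x) \<in> LB \<and> z \<noteq> f x}"
    then obtain y where "y \<in> A" "z = f y" using bij by (auto simp: bij_betw_def)
    then show "z \<in> f ` {y \<in> A. (y, x) \<in> LA \<and> y \<noteq> x}"
      using z linear_order_on_mono_inj_reflects[OF LA LB inj mono] \<open>x \<in> A\<close> by auto
  next
    fix z assume "z \<in> f ` {y \<in> A. (y, x) \<in> LA \<and> y \<noteq> x}"
    then show "z \<in> {z \<in> B. (z, f x) \<in> LB \<and> z \<noteq> f x}"
      using mono \<open>x \<in> A\<close> bij inj by (auto simp: bij_betw_def inj_on_eq_iff)
  qed
  then show ?thesis
    unfolding rank_in_def using inj by (simp add: card_image inj_on_subset)
qed

text \<open>The unique bijection is the one matching elements of equal rank.\<close>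

lemma ex1_mono_bij_linear_orders:
  assumes LA: "linear_order_on A LA" and LB: "linear_order_on B LB"
    and "finite A" "finite B" "card A = card B"
  shows "\<exists>!f. bij_betw f A B \<and> (\<forall>x\<in>A. \<forall>y\<in>A. (x, y) \<in> LA \<longrightarrow> (f x, f y) \<in> LB) \<and>
      (\<forall>x. x \<notin> A \<longrightarrow> f x = undefined)"
proof -
  have rA: "bij_betw (rank_in A LA) A {..<card A}" by (rule bij_betw_rank_in[OF LA \<open>finite A\<close>])
  have rB: "bij_betw (rank_in B LB) B {..<card A}"
    using bij_betw_rank_in[OF LB \<open>finite B\<close>] \<open>card A = card B\<close> by simp
  define g where "g x = (if x \<in> A then inv_into B (rank_in B LB) (rank_in A LA x) else undefined)"
    for x
  have bij: "bij_betw g A B"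
    using bij_betw_trans[OF rA bij_betw_inv_into[OF rB]]
    by (rule bij_betw_cong[THEN iffD1, rotated]) (simp add: g_def)
  have rank_g: "rank_in B LB (g x) = rank_in A LA x" if "x \<in> A" for x
    using that bij_betwE[OF rA] bij_betw_inv_into_right[OF rB] by (simp add: g_def)
  have mono: "\<forall>x\<in>A. \<forall>y\<in>A. (x, y) \<in> LA \<longrightarrow> (g x, g y) \<in> LB"
    using rank_in_le_iff[OF LA \<open>finite A\<close>] rank_in_le_iff[OF LB \<open>finite B\<close>] rank_g
      bij_betwE[OF bij] by metis
  show ?thesis
  proof (rule ex1I[of _ g])
    fix f assume f: "bij_betw f A B \<and> (\<forall>x\<in>A. \<forall>y\<in>A. (x, y) \<in> LA \<longrightarrow> (f x, f y) \<in> LB) \<and>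
      (\<forall>x. x \<notin> A \<longrightarrow> f x = undefined)"
    have "f x = g x" if "x \<in> A" for x
      using rank_in_mono_bij[OF LA LB, of f x] rank_g[OF that] f that bij_betwE[OF bij]
        bij_betw_imp_inj_on[OF rB] by (metis bij_betwE inj_on_eq_iff)
    then show "f = g" using f by (auto simp: g_def)
  qed (use bij mono in \<open>simp add: g_def\<close>)
qed

lemma theta_bij_mono:
  assumes P: "plane_poset A h r" and Q: "plane_poset B h' r'" and "card A = card B"
  shows "bij_betw (theta A h r B h' r') A B"
    and "\<forall>x\<in>A. \<forall>y\<in>A. (x, y) \<in> tot h r \<longrightarrow>
           (theta A h r B h' r' x, theta A h r B h' r' y) \<in> tot h' r'"
  using theI'[OF ex1_mono_bij_linear_orders[OF plane_poset_linear_order_on_tot[OF P]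
        plane_poset_linear_order_on_tot[OF Q] plane_posetD(1)[OF P] plane_posetD(1)[OF Q]
        \<open>card A = card B\<close>]]
  unfolding theta_def by blast+

lemma theta_swap: "theta A r h B h' r' = theta A h r B h' r'"
  unfolding theta_def tot_def by (simp add: Un_commute)

lemma card_Diff_Id_Un_converse:
  assumes "antisym R" "finite R"
  shows "card ((R - Id) \<union> (R - Id)\<inverse>) = 2 * card (R - Id)"
proof -
  have "(R - Id) \<inter> (R - Id)\<inverse> = {}" using assms(1) by (auto dest: antisymD)
  then show ?thesis using assms(2) by (simp add: card_Un_disjoint)
qed

lemma ell_eq_card_Diff_Id: "r \<subseteq> A \<times> A \<Longrightarrow> ell A r = card (r - Id)"
  unfolding ell_def strict_def by (rule arg_cong[of _ _ card]) auto

lemma plane_poset_ell_sum: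
  assumes P: "plane_poset A h r"
  shows "2 * (ell A h + ell A r) = card A * (card A - 1)"
proof -
  note h = partial_order_onD[OF plane_posetD(2)[OF P]]
    and r = partial_order_onD[OF plane_posetD(3)[OF P]]
  have fin: "finite h" "finite r"
    using h(4) r(4) plane_posetD(1)[OF P] by (auto intro: finite_subset)
  have off_diagonal: "A \<times> A - Id = ((h - Id) \<union> (h - Id)\<inverse>) \<union> ((r - Id) \<union> (r - Id)\<inverse>)"
    using h(4) r(4) plane_posetD(4)[OF P] by auto
  have "((h - Id) \<union> (h - Id)\<inverse>) \<inter> ((r - Id) \<union> (r - Id)\<inverse>) = {}"
    using plane_posetD(4)[OF P] h(4) by auto
  then have "card (A \<times> A - Id) = 2 * card (h - Id) + 2 * card (r - Id)"
    unfolding off_diagonal using fin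
    by (simp add: card_Un_disjoint card_Diff_Id_Un_converse h(3) r(3))
  moreover have "card (A \<times> A - Id) = card A * card A - card A"
  proof -
    have "A \<times> A \<inter> Id = (\<lambda>x. (x, x)) ` A" by auto
    moreover have "card ((\<lambda>x. (x, x)) ` A) = card A" by (simp add: card_image inj_on_def)
    ultimately show ?thesis using plane_posetD(1)[OF P]
      by (simp add: Diff_Int2[symmetric] card_Diff_subset_Int card_cartesian_product)
  qed
  ultimately show ?thesis
    using ell_eq_card_Diff_Id[OF h(4)] ell_eq_card_Diff_Id[OF r(4)]
    by (simp add: diff_mult_distrib2)
qed

lemma card_strict_pairs_reflected:
  assumes bij: "bij_betw f A B"
    and reflects: "\<forall>x\<in>A. \<forall>y\<in>A. (f x, f y) \<in> h' \<longrightarrow> (x, y) \<in> r"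
  shows "card {(x, y). x \<in> A \<and> y \<in> A \<and> (x, y) \<in> strict r \<and> (f x, f y) \<in> strict h'} = ell B h'"
proof -
  let ?C = "{(x, y). x \<in> A \<and> y \<in> A \<and> (x, y) \<in> strict r \<and> (f x, f y) \<in> strict h'}"
  have inj: "inj_on f A" using bij by (rule bij_betw_imp_inj_on)
  have image: "map_prod f f ` ?C = {(u, v). u \<in> B \<and> v \<in> B \<and> (u, v) \<in> strict h'}"
  proof (intro equalityI subsetI)
    fix p assume "p \<in> map_prod f f ` ?C"
    then show "p \<in> {(u, v). u \<in> B \<and> v \<in> B \<and> (u, v) \<in> strict h'}"
      using bij_betwE[OF bij] by auto
  next
    fix p assume "p \<in> {(u, v). u \<in> B \<and> v \<in> B \<and> (u, v) \<in> strict h'}"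
    then obtain u v where "p = (u, v)" "u \<in> f ` A" "v \<in> f ` A" "(u, v) \<in> strict h'"
      using bij by (auto simp: bij_betw_def)
    then obtain x y where "x \<in> A" "y \<in> A" "p = (f x, f y)" "(f x, f y) \<in> strict h'"
      by blast
    then show "p \<in> map_prod f f ` ?C"
      using reflects by (auto simp: strict_def)
  qed
  have "inj_on (map_prod f f) ?C"
    by (rule inj_on_subset[OF map_prod_inj_on[OF inj inj]]) auto
  then show ?thesis unfolding ell_def image[symmetric] by (rule card_image[symmetric])
qed

lemma strict_h_pairs_map_to_strict_r:
  assumes P: "plane_poset A h r" and "inj_on f A"
    and mono: "\<forall>x\<in>A. \<forall>y\<in>A. (x, y) \<in> tot h r \<longrightarrow> (f x, f y) \<in> tot h' r'"
    and reflects: "\<forall>x\<in>A. \<forall>y\<in>A. (f x, f y) \<in> h' \<longrightarrow> (x, y) \<in> r"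
  shows "{(x, y). x \<in> A \<and> y \<in> A \<and> (x, y) \<in> strict h \<and> (f x, f y) \<in> strict r'}
       = {(x, y). x \<in> A \<and> y \<in> A \<and> (x, y) \<in> strict h}"
proof (intro equalityI subsetI)
  fix p assume "p \<in> {(x, y). x \<in> A \<and> y \<in> A \<and> (x, y) \<in> strict h}"
  then obtain x y where xy: "p = (x, y)" "x \<in> A" "y \<in> A" "(x, y) \<in> h" "x \<noteq> y"
    by (auto simp: strict_def)
  then have "(x, y) \<notin> r" using plane_posetD(4)[OF P] by blast
  then have "(f x, f y) \<in> r'" using mono reflects xy by (auto simp: tot_def)
  moreover have "f x \<noteq> f y" using \<open>inj_on f A\<close> xy by (auto dest: inj_onD)
  ultimately show "p \<in> {(x, y). x \<in> A \<and> y \<in> A \<and> (x, y) \<in> strict h \<and> (f x, f y) \<in> strict r'}"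
    using xy by (simp add: strict_def)
qed auto

theorem proposition28:
  fixes q :: "'k::field" and A :: "'a set" and B :: "'b set"
    and h r :: "'a rel" and h' r' :: "'b rel" and n :: nat
  assumes "plane_poset A h r" and "plane_poset B h' r'"
    and "card A = n" and "card B = n"
    and "pp_le A r h B h' r'"
  shows "pairing q A h r B h' r' = q ^ (n * (n - 1) - ell A r - ell B r')"
proof -
  let ?\<theta> = "theta A h r B h' r'"
  have bij: "bij_betw ?\<theta> A B"
    and mono: "\<forall>x\<in>A. \<forall>y\<in>A. (x, y) \<in> tot h r \<longrightarrow> (?\<theta> x, ?\<theta> y) \<in> tot h' r'"
    using theta_bij_mono[OF assms(1,2)] assms(3,4) by simp_all
  have reflects: "\<forall>x\<in>A. \<forall>y\<in>A. (?\<theta> x, ?\<theta> y) \<in> h' \<longrightarrow> (x, y) \<in> r"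
    using assms(5) by (simp add: pp_le_def theta_swap)
  have "phi A h r B h' r' = ell B h' + ell A h"
    unfolding phi_def Let_def
    using card_strict_pairs_reflected[OF bij reflects]
      strict_h_pairs_map_to_strict_r[OF assms(1) bij_betw_imp_inj_on[OF bij] mono reflects]
    by (simp add: ell_def)
  also have "\<dots> = n * (n - 1) - ell A r - ell B r'"
    using plane_poset_ell_sum[OF assms(1)] plane_poset_ell_sum[OF assms(2)] assms(3,4)
    by (simp; linarith)
  finally show ?thesis using assms(5) by (simp add: pairing_def)
qed

end
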